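(* Let $\mathcal{C}_n$ be the set of real symmetric positive-semidefinite $n\times n$ matrices $\mathbf{C}$ with spectral radius $\rho(\mathbf{C})\le1$, and let $\mathbf{y}_0,\mathbf{y}_1\in\mathbb{R}^n$. Then $$\{\mathbf{C}\mathbf{y}_0+(\mathbf{I}_n-\mathbf{C})\mathbf{y}_1:\mathbf{C}\in\mathcal{C}_n\}=\Big\{\mathbf{y}\in\mathbb{R}^n:\Big\|\mathbf{y}-\tfrac{\mathbf{y}_0+\mathbf{y}_1}{2}\Big\|_2\le\tfrac12\|\mathbf{y}_1-\mathbf{y}_0\|_2\Big\},$$ i.e. the closed Euclidean ball centered at $(\mathbf{y}_0+\mathbf{y}_1)/2$ with radius $\frac12\|\mathbf{y}_1-\mathbf{y}_0\|_2$.
   Context: $\|\cdot\|_2$ is the Euclidean norm; $\mathbf{I}_n$ is the $n\times n$ identity matrix; $\rho(\mathbf{C})$ is the spectral radius (largest absolute value of an eigenvalue). *)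

theory Defs
  imports "HOL-Analysis.Analysis"
begin

definition complex_eigenvalues :: "real^'n^'n \<Rightarrow> complex set" where
  "complex_eigenvalues A =
     {z. \<exists>v::complex^'n. v \<noteq> 0 \<and>
          (\<chi> i j. complex_of_real (A $ i $ j)) *v v = (\<chi> i. z * v $ i)}"

definition spectral_radius :: "real^'n^'n \<Rightarrow> real" where
  "spectral_radius A = Sup (cmod ` complex_eigenvalues A)"

definition psd :: "real^'n^'n \<Rightarrow> bool" where
  "psd A \<longleftrightarrow> (\<forall>x. 0 \<le> x \<bullet> (A *v x))"

definition C_set :: "(real^'n^'n) set" where
  "C_set = {C. transpose C = C \<and> psd C \<and> spectral_radius C \<le> 1}"

end

theory Submission
  imports Defs
begin

text \<open>For a symmetric positive-semidefinite \<open>C\<close> the condition \<open>\<rho>(C) \<le> 1\<close> amounts to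
  \<open>x \<bullet> C x \<le> \<parallel>x\<parallel>\<^sup>2\<close>, since the top eigenvalue is the maximum of the Rayleigh quotient.
  Writing \<open>d = y\<^sub>0 - y\<^sub>1\<close>, the points in question are \<open>y\<^sub>1 + C d\<close>, and the ball is the set of
  \<open>y\<^sub>1 + z\<close> with \<open>z \<bullet> z \<le> z \<bullet> d\<close> (Thales). Cauchy-Schwarz for the form of \<open>C\<close> gives
  \<open>\<parallel>C d\<parallel>\<^sup>4 \<le> (d \<bullet> C d) (C d \<bullet> C (C d)) \<le> (d \<bullet> C d) \<parallel>C d\<parallel>\<^sup>2\<close>, so \<open>z = C d\<close> lies in the ball;
  conversely every such \<open>z\<close> is attained by the rank-one matrix \<open>z z\<^sup>T / (z \<bullet> d)\<close>.\<close>

lemma inner_matrix_vector_symmetric: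
  fixes A :: "real^'n^'n"
  assumes "transpose A = A"
  shows "x \<bullet> (A *v y) = (A *v x) \<bullet> y"
  by (metis assms dot_lmul_matrix transpose_matrix_vector)

lemma psd_Cauchy_Schwarz:
  fixes M :: "real^'n^'n"
  assumes sym: "transpose M = M" and "psd M"
  shows "(y \<bullet> (M *v x))\<^sup>2 \<le> (x \<bullet> (M *v x)) * (y \<bullet> (M *v y))"
proof -
  have psd: "0 \<le> u \<bullet> (M *v u)" for u
    using \<open>psd M\<close> unfolding psd_def by blast
  define a b c where "a = x \<bullet> (M *v x)" and "b = y \<bullet> (M *v x)" and "c = y \<bullet> (M *v y)"
  have quadratic_nonneg: "0 \<le> a + 2 * t * b + t\<^sup>2 * c" for t
  proof -
    have "0 \<le> (x + t *\<^sub>R y) \<bullet> (M *v (x + t *\<^sub>R y))" by (rule psd)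
    also have "\<dots> = a + t * (y \<bullet> (M *v x)) + t * (x \<bullet> (M *v y)) + t\<^sup>2 * c"
      unfolding a_def c_def
      by (simp add: matrix_vector_right_distrib matrix_vector_mult_scaleR inner_add_left
          inner_add_right algebra_simps power2_eq_square)
    also have "x \<bullet> (M *v y) = y \<bullet> (M *v x)"
      using inner_matrix_vector_symmetric[OF sym, of x y] by (simp add: inner_commute)
    finally show ?thesis unfolding b_def by simp
  qed
  have "b\<^sup>2 \<le> a * c"
  proof (cases "c = 0")
    case True
    have "b = 0"
    proof (rule ccontr)
      assume "b \<noteq> 0"
      have "0 \<le> a + 2 * (- (a + 1) / (2 * b)) * b"
        using quadratic_nonneg[of "- (a + 1) / (2 * b)"] True by simp
      also have "\<dots> = -1" using \<open>b \<noteq> 0\<close> by (simp add: field_simps)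
      finally show False by simp
    qed
    then show ?thesis using True by simp
  next
    case False
    then have "c > 0" using psd[of y] unfolding c_def by simp
    have "0 \<le> a + 2 * (- b / c) * b + (- b / c)\<^sup>2 * c" by (rule quadratic_nonneg)
    also have "\<dots> = a - b\<^sup>2 / c" using \<open>c > 0\<close> by (simp add: field_simps power2_eq_square)
    finally show ?thesis using \<open>c > 0\<close> by (simp add: field_simps mult.commute)
  qed
  then show ?thesis unfolding a_def b_def c_def .
qed

lemma psd_quadratic_form_eq_0_imp:
  fixes M :: "real^'n^'n"
  assumes "transpose M = M" "psd M" and "x \<bullet> (M *v x) = 0"
  shows "M *v x = 0"
proof -
  have "((M *v x) \<bullet> (M *v x))\<^sup>2 \<le> 0"
    using psd_Cauchy_Schwarz[OF assms(1,2), of "M *v x" x] assms(3) by simp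
  then show ?thesis by simp
qed

lemma matrix_vector_mult_mat: "mat l *v (x::real^'n) = l *\<^sub>R x"
proof -
  have "mat l = l *\<^sub>R (mat 1 :: real^'n^'n)" by (simp add: vec_eq_iff mat_def)
  then show ?thesis by (metis scaleR_matrix_vector_assoc matrix_vector_mul_lid)
qed

lemma transpose_mat_diff_symmetric:
  fixes A :: "real^'n^'n"
  assumes "transpose A = A"
  shows "transpose (mat l - A) = mat l - A"
proof -
  have "A $ j $ i = A $ i $ j" for i j
    using arg_cong[OF assms, of "\<lambda>B. B $ i $ j"] by (simp add: transpose_def)
  then show ?thesis by (simp add: vec_eq_iff transpose_def mat_def)
qed

lemma continuous_on_quadratic_form:
  fixes A :: "real^'n^'n"
  shows "continuous_on S (\<lambda>x::real^'n. x \<bullet> (A *v x))"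
proof -
  have "continuous_on S ((*v) A)"
    by (intro linear_continuous_on linear_conv_bounded_linear[THEN iffD1] matrix_vector_mul_linear)
  then show ?thesis by (intro continuous_on_inner continuous_on_id)
qed

text \<open>The maximiser of the Rayleigh quotient on the unit sphere is an eigenvector: with \<open>l\<close>
  the maximum, \<open>l I - A\<close> is positive semidefinite and its form vanishes at the maximiser.\<close>

lemma symmetric_Rayleigh_max_eigenvector:
  fixes A :: "real^'n^'n"
  assumes sym: "transpose A = A"
  obtains x0 where "norm x0 = 1" "A *v x0 = (x0 \<bullet> (A *v x0)) *\<^sub>R x0"
    "\<And>x. x \<bullet> (A *v x) \<le> (x0 \<bullet> (A *v x0)) * (norm x)\<^sup>2"
proof -
  let ?f = "\<lambda>x::real^'n. x \<bullet> (A *v x)"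
  have "axis undefined 1 \<in> sphere (0::real^'n) 1" by (simp add: norm_axis_1)
  then have "sphere (0::real^'n) 1 \<noteq> {}" by blast
  then obtain x0 where x0: "x0 \<in> sphere 0 1" and max: "\<And>y. y \<in> sphere 0 1 \<Longrightarrow> ?f y \<le> ?f x0"
    using continuous_attains_sup[OF compact_sphere _ continuous_on_quadratic_form] by blast
  define l where "l = ?f x0"
  have bound: "?f x \<le> l * (norm x)\<^sup>2" for x
  proof (cases "x = 0")
    case False
    then have "norm x > 0" by simp
    have "?f ((1 / norm x) *\<^sub>R x) \<le> l"
      unfolding l_def using max[of "(1 / norm x) *\<^sub>R x"] \<open>norm x > 0\<close> by simp
    moreover have "?f ((1 / norm x) *\<^sub>R x) = ?f x / (norm x)\<^sup>2"
      by (simp add: matrix_vector_mult_scaleR power2_eq_square)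
    ultimately show ?thesis using \<open>norm x > 0\<close> by (simp add: field_simps)
  qed simp
  define M where "M = mat l - A"
  have M_form: "x \<bullet> (M *v x) = l * (norm x)\<^sup>2 - ?f x" for x
    unfolding M_def
    by (simp add: matrix_vector_mult_diff_rdistrib inner_diff_right matrix_vector_mult_mat
        power2_norm_eq_inner)
  have "transpose M = M" unfolding M_def by (rule transpose_mat_diff_symmetric[OF sym])
  moreover have "psd M" unfolding psd_def using bound M_form by simp
  moreover have "x0 \<bullet> (M *v x0) = 0" using M_form[of x0] x0 unfolding l_def by simp
  ultimately have "M *v x0 = 0" by (rule psd_quadratic_form_eq_0_imp)
  then have "A *v x0 = l *\<^sub>R x0"
    unfolding M_def by (simp add: matrix_vector_mult_diff_rdistrib matrix_vector_mult_mat)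
  then show ?thesis using that x0 bound unfolding l_def by simp
qed

text \<open>Real and imaginary parts \<open>a, b\<close> of a complex eigenvector satisfy \<open>A a = p a - q b\<close>,
  \<open>A b = q a + p b\<close>; symmetry of \<open>A\<close> then forces \<open>q (\<parallel>a\<parallel>\<^sup>2 + \<parallel>b\<parallel>\<^sup>2) = 0\<close>.\<close>

lemma complex_eigenvalue_symmetric_real:
  fixes A :: "real^'n^'n"
  assumes sym: "transpose A = A" and "z \<in> complex_eigenvalues A"
  shows "Im z = 0 \<and> (\<exists>w. w \<noteq> 0 \<and> A *v w = Re z *\<^sub>R w)"
proof -
  obtain v :: "complex^'n" where "v \<noteq> 0"
    and ev: "(\<chi> i j. complex_of_real (A $ i $ j)) *v v = (\<chi> i. z * v $ i)"
    using assms(2) unfolding complex_eigenvalues_def by blast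
  define a b where "a = (\<chi> i. Re (v $ i))" and "b = (\<chi> i. Im (v $ i))"
  define p q where "p = Re z" and "q = Im z"
  have row: "(\<Sum>j\<in>UNIV. complex_of_real (A $ i $ j) * v $ j) = z * v $ i" for i
    using arg_cong[OF ev, of "\<lambda>u. u $ i"] by (simp add: matrix_vector_mult_def)
  have Aa: "A *v a = p *\<^sub>R a - q *\<^sub>R b"
    using arg_cong[OF row, of Re]
    by (simp add: vec_eq_iff matrix_vector_mult_def a_def b_def p_def q_def Re_sum)
  have Ab: "A *v b = q *\<^sub>R a + p *\<^sub>R b"
    using arg_cong[OF row, of Im]
    by (simp add: vec_eq_iff matrix_vector_mult_def a_def b_def p_def q_def Im_sum algebra_simps)
  have "a \<bullet> (A *v b) = (A *v a) \<bullet> b" by (rule inner_matrix_vector_symmetric[OF sym])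
  then have q0: "q * (a \<bullet> a + b \<bullet> b) = 0"
    unfolding Aa Ab by (simp add: inner_add_right inner_diff_left inner_commute algebra_simps)
  have ab: "a \<noteq> 0 \<or> b \<noteq> 0"
    using \<open>v \<noteq> 0\<close> unfolding a_def b_def by (auto simp: vec_eq_iff complex_eq_iff)
  then have "a \<bullet> a + b \<bullet> b > 0"
    by (metis add_nonneg_pos add_pos_nonneg inner_gt_zero_iff inner_ge_zero)
  with q0 have "q = 0" by simp
  then show ?thesis using ab Aa Ab unfolding p_def q_def by auto
qed

lemma of_real_in_complex_eigenvalues:
  fixes A :: "real^'n^'n"
  assumes "w \<noteq> 0" "A *v w = l *\<^sub>R w"
  shows "complex_of_real l \<in> complex_eigenvalues A"
proof -
  define v where "v = (\<chi> i. complex_of_real (w $ i))"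
  have "v \<noteq> 0" using assms(1) unfolding v_def by (simp add: vec_eq_iff)
  moreover have "(\<chi> i j. complex_of_real (A $ i $ j)) *v v = (\<chi> i. complex_of_real l * v $ i)"
  proof -
    have "(\<Sum>j\<in>UNIV. A $ i $ j * w $ j) = l * w $ i" for i
      using arg_cong[OF assms(2), of "\<lambda>u. u $ i"] by (simp add: matrix_vector_mult_def)
    then have "(\<Sum>j\<in>UNIV. complex_of_real (A $ i $ j) * complex_of_real (w $ j))
        = complex_of_real l * complex_of_real (w $ i)" for i
      by (simp only: flip: of_real_sum of_real_mult)
    then show ?thesis by (simp add: vec_eq_iff matrix_vector_mult_def v_def)
  qed
  ultimately show ?thesis unfolding complex_eigenvalues_def by (intro CollectI exI[of _ v] conjI)
qed

lemma cmod_complex_eigenvalue_psd_le: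
  fixes A :: "real^'n^'n"
  assumes "transpose A = A" "psd A" and bound: "\<And>x. x \<bullet> (A *v x) \<le> c * (norm x)\<^sup>2"
    and "z \<in> complex_eigenvalues A"
  shows "cmod z \<le> c"
proof -
  obtain w where "Im z = 0" "w \<noteq> 0" and w: "A *v w = Re z *\<^sub>R w"
    using complex_eigenvalue_symmetric_real[OF assms(1,4)] by blast
  have form: "w \<bullet> (A *v w) = Re z * (norm w)\<^sup>2" using w by (simp add: power2_norm_eq_inner)
  have "(norm w)\<^sup>2 > 0" using \<open>w \<noteq> 0\<close> by simp
  have "0 \<le> w \<bullet> (A *v w)" using \<open>psd A\<close> unfolding psd_def by simp
  then have "0 \<le> Re z" using form \<open>(norm w)\<^sup>2 > 0\<close> by (simp add: zero_le_mult_iff)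
  moreover have "Re z \<le> c" using bound[of w] form \<open>(norm w)\<^sup>2 > 0\<close> by simp
  moreover have "cmod z = \<bar>Re z\<bar>" using \<open>Im z = 0\<close> by (simp add: cmod_def)
  ultimately show ?thesis by simp
qed

lemma spectral_radius_psd_le_iff:
  fixes A :: "real^'n^'n"
  assumes sym: "transpose A = A" and "psd A"
  shows "spectral_radius A \<le> c \<longleftrightarrow> (\<forall>x. x \<bullet> (A *v x) \<le> c * (norm x)\<^sup>2)"
proof -
  obtain x0 where "norm x0 = 1" and x0: "A *v x0 = (x0 \<bullet> (A *v x0)) *\<^sub>R x0"
    and max: "\<And>x. x \<bullet> (A *v x) \<le> (x0 \<bullet> (A *v x0)) * (norm x)\<^sup>2"
    using symmetric_Rayleigh_max_eigenvector[OF sym] by blast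
  define l where "l = x0 \<bullet> (A *v x0)"
  have l: "complex_of_real l \<in> complex_eigenvalues A"
    using of_real_in_complex_eigenvalues[OF _ x0] \<open>norm x0 = 1\<close> unfolding l_def by force
  have "0 \<le> l" using \<open>psd A\<close> unfolding l_def psd_def by simp
  show ?thesis
  proof
    assume "spectral_radius A \<le> c"
    have "bdd_above (cmod ` complex_eigenvalues A)"
      by (rule bdd_aboveI2, rule cmod_complex_eigenvalue_psd_le[OF sym \<open>psd A\<close> max])
    then have "l \<le> spectral_radius A"
      using cSup_upper[OF imageI[OF l], of cmod] \<open>0 \<le> l\<close> unfolding spectral_radius_def by simp
    then have "l \<le> c" using \<open>spectral_radius A \<le> c\<close> by simp
    show "\<forall>x. x \<bullet> (A *v x) \<le> c * (norm x)\<^sup>2"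
    proof
      fix x
      have "x \<bullet> (A *v x) \<le> l * (norm x)\<^sup>2" using max unfolding l_def .
      also have "\<dots> \<le> c * (norm x)\<^sup>2" using \<open>l \<le> c\<close> by (simp add: mult_right_mono)
      finally show "x \<bullet> (A *v x) \<le> c * (norm x)\<^sup>2" .
    qed
  next
    assume "\<forall>x. x \<bullet> (A *v x) \<le> c * (norm x)\<^sup>2"
    then show "spectral_radius A \<le> c"
      unfolding spectral_radius_def using l cmod_complex_eigenvalue_psd_le[OF sym \<open>psd A\<close>]
      by (intro cSup_least) blast+
  qed
qed

lemma C_set_iff:
  "C \<in> C_set \<longleftrightarrow> transpose C = C \<and> psd C \<and> (\<forall>x. x \<bullet> (C *v x) \<le> (norm x)\<^sup>2)"
  using spectral_radius_psd_le_iff[of C 1] unfolding C_set_def by auto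

lemma psd_contraction_norm_le:
  fixes A :: "real^'n^'n"
  assumes sym: "transpose A = A" and "psd A" and contr: "\<And>x. x \<bullet> (A *v x) \<le> (norm x)\<^sup>2"
  shows "(A *v d) \<bullet> (A *v d) \<le> d \<bullet> (A *v d)"
proof -
  define u where "u = (A *v d) \<bullet> (A *v d)"
  have "0 \<le> d \<bullet> (A *v d)" using \<open>psd A\<close> unfolding psd_def by simp
  have "u\<^sup>2 \<le> (d \<bullet> (A *v d)) * ((A *v d) \<bullet> (A *v (A *v d)))"
    unfolding u_def by (rule psd_Cauchy_Schwarz[OF sym \<open>psd A\<close>])
  also have "\<dots> \<le> (d \<bullet> (A *v d)) * u"
    using contr[of "A *v d"] \<open>0 \<le> d \<bullet> (A *v d)\<close> unfolding u_def
    by (intro mult_left_mono) (auto simp: power2_norm_eq_inner)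
  finally have "u * u \<le> (d \<bullet> (A *v d)) * u" by (simp add: power2_eq_square)
  moreover have "0 \<le> u" unfolding u_def by simp
  ultimately show ?thesis
    using \<open>0 \<le> d \<bullet> (A *v d)\<close> unfolding u_def[symmetric]
    by (cases "u = 0") (auto simp: mult_le_cancel_right)
qed

text \<open>If \<open>z \<bullet> d = 0\<close> the hypothesis forces \<open>z = 0\<close>, and division by zero makes \<open>C\<close> the zero matrix.\<close>

lemma rank_one_in_C_set:
  fixes z d :: "real^'n"
  assumes zd: "z \<bullet> z \<le> z \<bullet> d"
  defines "C \<equiv> \<chi> i j. z $ i * z $ j / (z \<bullet> d)"
  shows "C \<in> C_set" and "C *v d = z"
proof -
  define s where "s = z \<bullet> d"
  have "0 \<le> s" using zd unfolding s_def by (metis inner_ge_zero order_trans)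
  have Cx: "C *v x = ((z \<bullet> x) / s) *\<^sub>R z" for x
    by (simp add: vec_eq_iff C_def s_def matrix_vector_mult_def inner_vec_def sum_divide_distrib
        sum_distrib_left algebra_simps)
  have form: "x \<bullet> (C *v x) = (z \<bullet> x)\<^sup>2 / s" for x
    by (simp add: Cx inner_commute power2_eq_square)
  have "transpose C = C" unfolding C_def by (simp add: vec_eq_iff transpose_def mult.commute)
  moreover have "psd C" unfolding psd_def form using \<open>0 \<le> s\<close> by simp
  moreover have "x \<bullet> (C *v x) \<le> (norm x)\<^sup>2" for x
  proof -
    have "(z \<bullet> x)\<^sup>2 \<le> (norm z * norm x)\<^sup>2"
      using Cauchy_Schwarz_ineq2[of z x] by (metis abs_ge_zero power_mono power2_abs)
    also have "\<dots> = (z \<bullet> z) * (norm x)\<^sup>2" by (simp add: power_mult_distrib power2_norm_eq_inner)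
    also have "\<dots> \<le> s * (norm x)\<^sup>2" using zd unfolding s_def by (simp add: mult_right_mono)
    finally show ?thesis
      using \<open>0 \<le> s\<close> unfolding form by (cases "s = 0") (simp_all add: divide_le_eq mult.commute)
  qed
  ultimately show "C \<in> C_set" unfolding C_set_iff by blast
  show "C *v d = z"
  proof (cases "s = 0")
    case True
    then have "z \<bullet> z = 0" using zd inner_ge_zero[of z] unfolding s_def by linarith
    then have "z = 0" by simp
    then show ?thesis by (simp add: Cx)
  qed (simp add: Cx s_def)
qed

lemma image_C_set_matrix_vector_mult:
  fixes d :: "real^'n"
  shows "(\<lambda>C. C *v d) ` C_set = {z. z \<bullet> z \<le> z \<bullet> d}"
proof (intro set_eqI iffI)
  fix z assume "z \<in> (\<lambda>C. C *v d) ` C_set"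
  then obtain C where "C \<in> C_set" and "z = C *v d" by blast
  then show "z \<in> {z. z \<bullet> z \<le> z \<bullet> d}"
    using psd_contraction_norm_le[of C d] unfolding C_set_iff by (simp add: inner_commute)
next
  fix z assume "z \<in> {z. z \<bullet> z \<le> z \<bullet> d}"
  then show "z \<in> (\<lambda>C. C *v d) ` C_set"
    using rank_one_in_C_set[of z d] by (metis (no_types, lifting) image_eqI mem_Collect_eq)
qed

lemma mem_cball_diameter_iff:
  fixes a b y :: "'a::real_inner"
  shows "y \<in> cball ((1/2) *\<^sub>R (a + b)) ((1/2) * norm (b - a)) \<longleftrightarrow>
         (y - b) \<bullet> (y - b) \<le> (y - b) \<bullet> (a - b)"
proof -
  have "y \<in> cball ((1/2) *\<^sub>R (a + b)) ((1/2) * norm (b - a)) \<longleftrightarrow>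
        (norm ((1/2) *\<^sub>R (a + b) - y))\<^sup>2 \<le> ((1/2) * norm (b - a))\<^sup>2"
    by (simp add: dist_norm)
  also have "((1/2) * norm (b - a))\<^sup>2 = (b - a) \<bullet> (b - a) / 4"
    by (simp add: power_mult_distrib power_divide flip: power2_norm_eq_inner)
  also have "(norm ((1/2) *\<^sub>R (a + b) - y))\<^sup>2 \<le> (b - a) \<bullet> (b - a) / 4 \<longleftrightarrow>
             (y - b) \<bullet> (y - b) \<le> (y - b) \<bullet> (a - b)"
    by (simp add: power2_norm_eq_inner inner_diff_left inner_diff_right
        inner_add_left inner_add_right inner_commute algebra_simps) linarith
  finally show ?thesis .
qed

theorem lemma5:
  fixes y0 y1 :: "real^'n"
  shows "{C *v y0 + (mat 1 - C) *v y1 | C. C \<in> C_set} =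
         cball ((1/2) *\<^sub>R (y0 + y1)) ((1/2) * norm (y1 - y0))"
proof -
  have affine: "C *v y0 + (mat 1 - C) *v y1 = y1 + C *v (y0 - y1)" for C :: "real^'n^'n"
    by (simp add: matrix_vector_mult_diff_rdistrib matrix_vector_mult_diff_distrib algebra_simps)
  have "{C *v y0 + (mat 1 - C) *v y1 | C. C \<in> C_set} = (+) y1 ` (\<lambda>C. C *v (y0 - y1)) ` C_set"
    unfolding affine by blast
  also have "\<dots> = (+) y1 ` {z. z \<bullet> z \<le> z \<bullet> (y0 - y1)}"
    by (simp only: image_C_set_matrix_vector_mult)
  also have "\<dots> = cball ((1/2) *\<^sub>R (y0 + y1)) ((1/2) * norm (y1 - y0))"
    unfolding mem_cball_diameter_iff set_eq_iff
    by (metis (no_types, lifting) add_diff_cancel_left' diff_add_cancel image_iff mem_Collect_eq)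
  finally show ?thesis .
qed

end
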